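(* Let $\mathcal{X}\subset\mathbb{R}^N$ be convex and compact, and let $f_t,f_{t+1}:\mathbb{R}^N\to\mathbb{R}$ be differentiable convex functions such that $|f_t(\mathbf{x})-f_{t+1}(\mathbf{x})|\le\Delta$ for all $\mathbf{x}\in\mathcal{X}$, for some $\Delta<\infty$. Let $\bar{\mathbf{x}}_{t+1}\in\mathcal{X}$, and let $\mathbf{g}_t\in\mathbb{R}^N$ and $\epsilon>0$ satisfy $\|\mathbf{g}_t-\nabla f_{t+1}(\bar{\mathbf{x}}_{t+1})\|\le\epsilon$, with $\|\mathbf{g}_t\|>\epsilon$. Fix $\zeta>0$, $\beta\in(0,1)$ and $M\in\mathbb{N}$, and let $\mathbf{d}_{t+1}=\mathrm{proj}_{\mathcal{X}}(\bar{\mathbf{x}}_{t+1}-\zeta\mathbf{g}_t)-\bar{\mathbf{x}}_{t+1}$. Run the following backtracking line search: let $m$ be the smallest integer in $\{0,1,\dots,M\}$ such that $$f_t(\bar{\mathbf{x}}_{t+1}+\beta^m\mathbf{d}_{t+1})\le f_t(\bar{\mathbf{x}}_{t+1})+\beta^m\big(\mathbf{g}_t^\top\mathbf{d}_{t+1}-\epsilon\|\mathbf{d}_{t+1}\|\big)-2\Delta,$$ and return step size $\beta^m$; if no such $m$ exists, return step size $0$. If the line search terminates with a step size $\beta^m>0$, then the predictive update $\mathbf{x}_{t+1}=\bar{\mathbf{x}}_{t+1}+\beta^m\mathbf{d}_{t+1}$ satisfies the modified Armijo condition $$f_{t+1}(\bar{\mathbf{x}}_{t+1}+\beta^m\mathbf{d}_{t+1})\le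 f_{t+1}(\bar{\mathbf{x}}_{t+1})+\beta^m\nabla f_{t+1}(\bar{\mathbf{x}}_{t+1})^\top\mathbf{d}_{t+1},$$ and hence leads to a sufficient decrease in the loss function.
   Context: $\|\cdot\|$ is the Euclidean norm and $\mathrm{proj}_{\mathcal{X}}(\mathbf{x})\in\arg\min_{\mathbf{y}\in\mathcal{X}}\|\mathbf{x}-\mathbf{y}\|$. In the paper's online setting, $\bar{\mathbf{x}}_{t+1}$ is the decision computed by an online convex optimization update at round $t$ after $f_t$ is revealed, $\mathbf{g}_t$ is an estimate of the gradient of the (not yet revealed) next loss $f_{t+1}$ at $\bar{\mathbf{x}}_{t+1}$ with error at most $\epsilon$, and $\Delta$ is a time-Lipschitz constant of the loss sequence. *)

theory Defs
  imports "HOL-Analysis.Analysis"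
begin

definition pred_dir :: "('a::euclidean_space) set \<Rightarrow> real \<Rightarrow> 'a \<Rightarrow> 'a \<Rightarrow> 'a" where
  "pred_dir X zeta xbar g = closest_point X (xbar - zeta *\<^sub>R g) - xbar"

definition ls_cond :: "('a::euclidean_space \<Rightarrow> real) \<Rightarrow> 'a \<Rightarrow> 'a \<Rightarrow> 'a \<Rightarrow> real \<Rightarrow> real \<Rightarrow> real \<Rightarrow> nat \<Rightarrow> bool" where
  "ls_cond f xbar d g eps Delta beta m \<longleftrightarrow>
     f (xbar + (beta ^ m) *\<^sub>R d) \<le> f xbar + beta ^ m * (inner g d - eps * norm d) - 2 * Delta"

definition line_search :: "('a::euclidean_space \<Rightarrow> real) \<Rightarrow> 'a \<Rightarrow> 'a \<Rightarrow> 'a \<Rightarrow> real \<Rightarrow> real \<Rightarrow> real \<Rightarrow> nat \<Rightarrow> real" where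
  "line_search f xbar d g eps Delta beta M =
     (if \<exists>m\<le>M. ls_cond f xbar d g eps Delta beta m
      then beta ^ (LEAST m. m \<le> M \<and> ls_cond f xbar d g eps Delta beta m)
      else 0)"

end

theory Submission
  imports Defs
begin

text \<open>The accepted step lies in \<open>X\<close>, where \<open>f\<^sub>t\<close> and \<open>f\<^sub>t\<^sub>+\<^sub>1\<close> differ by at most \<open>\<Delta>\<close>; moving from
  \<open>f\<^sub>t\<close> to \<open>f\<^sub>t\<^sub>+\<^sub>1\<close> at the two points costs at most \<open>2\<Delta>\<close>, which the test pays for, and by
  Cauchy-Schwarz the margin \<open>\<epsilon> \<parallel>d\<parallel>\<close> absorbs the error of the gradient estimate \<open>g\<close>.\<close>

lemma line_search_pos_imp_ls_cond:
  assumes "line_search f x d g eps Delta beta M > 0"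
  obtains m where "m \<le> M" "line_search f x d g eps Delta beta M = beta ^ m"
    "ls_cond f x d g eps Delta beta m"
proof -
  have ex: "\<exists>m\<le>M. ls_cond f x d g eps Delta beta m"
    using assms unfolding line_search_def by (auto split: if_splits)
  define m where "m = (LEAST m. m \<le> M \<and> ls_cond f x d g eps Delta beta m)"
  have "m \<le> M \<and> ls_cond f x d g eps Delta beta m"
    unfolding m_def using ex by (metis (mono_tags, lifting) LeastI)
  moreover have "line_search f x d g eps Delta beta M = beta ^ m"
    unfolding line_search_def m_def using ex by simp
  ultimately show thesis using that by blast
qed

lemma pred_dir_step_in_set:
  assumes "convex X" "closed X" "x \<in> X" "0 \<le> s" "s \<le> 1"
  shows "x + s *\<^sub>R pred_dir X zeta x g \<in> X"
proof -
  have "closest_point X (x - zeta *\<^sub>R g) \<in> X"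
    using assms(2,3) by (intro closest_point_in_set) auto
  then have "(1 - s) *\<^sub>R x + s *\<^sub>R closest_point X (x - zeta *\<^sub>R g) \<in> X"
    using assms by (intro convexD) auto
  then show ?thesis
    unfolding pred_dir_def by (simp add: algebra_simps)
qed

lemma inner_diff_norm_le_inner:
  fixes g h d :: "'a::real_inner"
  assumes "norm (g - h) \<le> eps"
  shows "inner g d - eps * norm d \<le> inner h d"
proof -
  have "inner (g - h) d \<le> norm (g - h) * norm d" by (rule norm_cauchy_schwarz)
  also have "\<dots> \<le> eps * norm d" using assms by (simp add: mult_right_mono)
  finally show ?thesis by (simp add: inner_diff_left)
qed

theorem lemma4:
  fixes X :: "(real ^ 'n) set"
    and f0 f1 :: "real ^ 'n \<Rightarrow> real"
    and grad1 :: "real ^ 'n \<Rightarrow> real ^ 'n"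
    and xbar g :: "real ^ 'n"
    and Delta eps zeta beta :: real
    and M :: nat
  assumes "convex X" and "compact X"
    and "\<forall>x. f0 differentiable (at x)" and "convex_on UNIV f0"
    and "\<forall>x. GDERIV f1 x :> grad1 x" and "convex_on UNIV f1"
    and "\<forall>x\<in>X. \<bar>f0 x - f1 x\<bar> \<le> Delta"
    and "xbar \<in> X"
    and "eps > 0" and "norm (g - grad1 xbar) \<le> eps" and "norm g > eps"
    and "zeta > 0" and "0 < beta" and "beta < 1"
    and "line_search f0 xbar (pred_dir X zeta xbar g) g eps Delta beta M > 0"
  shows "f1 (xbar + (line_search f0 xbar (pred_dir X zeta xbar g) g eps Delta beta M)
                    *\<^sub>R pred_dir X zeta xbar g)
         \<le> f1 xbar + line_search f0 xbar (pred_dir X zeta xbar g) g eps Delta beta M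
                      * inner (grad1 xbar) (pred_dir X zeta xbar g)"
proof -
  define d where "d = pred_dir X zeta xbar g"
  define s where "s = line_search f0 xbar d g eps Delta beta M"
  obtain m where sm: "s = beta ^ m" and test: "ls_cond f0 xbar d g eps Delta beta m"
    using line_search_pos_imp_ls_cond assms(15) unfolding s_def d_def by metis
  have s01: "0 < s" "s \<le> 1" using sm assms(13,14) by (auto intro: power_le_one)
  have "xbar + s *\<^sub>R d \<in> X"
    unfolding d_def using assms(1,2,8) s01 by (intro pred_dir_step_in_set) (auto intro: compact_imp_closed)
  then have "f1 (xbar + s *\<^sub>R d) \<le> f0 (xbar + s *\<^sub>R d) + Delta" using assms(7) by force
  moreover have "f0 xbar \<le> f1 xbar + Delta" using assms(7,8) by force
  moreover have "f0 (xbar + s *\<^sub>R d) \<le> f0 xbar + s * (inner g d - eps * norm d) - 2 * Delta"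
    using test sm unfolding ls_cond_def by simp
  moreover have "s * (inner g d - eps * norm d) \<le> s * inner (grad1 xbar) d"
    using s01 inner_diff_norm_le_inner[OF assms(10)] by (simp add: mult_left_mono)
  ultimately show ?thesis unfolding s_def d_def by linarith
qed

end
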